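(* Let $D$ be a division algebra and let $\sigma_1,\sigma_2$ be two commuting automorphisms of $D$. In the skew polynomial ring $T=D[t_1,t_2;\sigma_1,\sigma_2]$, let $I$ be the two-sided ideal generated by $t_1t_2$, and let $S=T/I$. Then every two commuting elements of $S$ are (left) algebraically dependent over $D$.
   Context: $D[t_1,t_2;\sigma_1,\sigma_2]$ is the skew polynomial ring in two commuting variables with $t_ia=\sigma_i(a)t_i$ for $a\in D$. Commuting elements $x_1,x_2$ of a ring $S\supseteq D$ are (left) algebraically dependent over $D$ if the set of monomials $\{x_1^{i_1}x_2^{i_2}:(i_1,i_2)\in\mathbb{Z}_{\ge0}^2\}$ is not left linearly independent over $D$ (in particular if two distinct exponent pairs give the same monomial). *)

theory Defs
  imports "HOL-Algebra.QuotRing"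
begin

definition ring_automorphism :: "('a::division_ring \<Rightarrow> 'a) \<Rightarrow> bool" where
  "ring_automorphism \<sigma> \<longleftrightarrow> bij \<sigma> \<and> (\<forall>x y. \<sigma> (x + y) = \<sigma> x + \<sigma> y)
     \<and> (\<forall>x y. \<sigma> (x * y) = \<sigma> x * \<sigma> y) \<and> \<sigma> 1 = 1"

text \<open>Elements of D[t1,t2;s1,s2] are finitely supported coefficient functions
  p with p = sum of p(i,j) t1^i t2^j (coefficients on the left).
  Multiplication: (a t1^i t2^j)(b t1^k t2^l) = a s1^i(s2^j(b)) t1^(i+k) t2^(j+l).\<close>
definition skew_mult ::
  "('a::division_ring \<Rightarrow> 'a) \<Rightarrow> ('a \<Rightarrow> 'a) \<Rightarrow> (nat \<times> nat \<Rightarrow> 'a) \<Rightarrow> (nat \<times> nat \<Rightarrow> 'a) \<Rightarrow> (nat \<times> nat \<Rightarrow> 'a)" where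
  "skew_mult \<sigma>1 \<sigma>2 p q = (\<lambda>(m, n). \<Sum>i\<le>m. \<Sum>j\<le>n.
       p (i, j) * (\<sigma>1 ^^ i) ((\<sigma>2 ^^ j) (q (m - i, n - j))))"

definition skew_monom :: "'a::division_ring \<Rightarrow> nat \<times> nat \<Rightarrow> (nat \<times> nat \<Rightarrow> 'a)" where
  "skew_monom a e = (\<lambda>x. if x = e then a else 0)"

definition skew_poly_ring ::
  "('a::division_ring \<Rightarrow> 'a) \<Rightarrow> ('a \<Rightarrow> 'a) \<Rightarrow> (nat \<times> nat \<Rightarrow> 'a) ring" where
  "skew_poly_ring \<sigma>1 \<sigma>2 =
     \<lparr>carrier = {p. finite {x. p x \<noteq> 0}},
      monoid.mult = skew_mult \<sigma>1 \<sigma>2,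
      one = skew_monom 1 (0, 0),
      zero = (\<lambda>_. 0),
      add = (\<lambda>p q x. p x + q x)\<rparr>"

definition t1t2_ideal :: "('a::division_ring \<Rightarrow> 'a) \<Rightarrow> ('a \<Rightarrow> 'a) \<Rightarrow> (nat \<times> nat \<Rightarrow> 'a) set" where
  "t1t2_ideal \<sigma>1 \<sigma>2 = genideal (skew_poly_ring \<sigma>1 \<sigma>2) {skew_monom 1 (1, 1)}"

definition skew_quot ::
  "('a::division_ring \<Rightarrow> 'a) \<Rightarrow> ('a \<Rightarrow> 'a) \<Rightarrow> (nat \<times> nat \<Rightarrow> 'a) set ring" where
  "skew_quot \<sigma>1 \<sigma>2 = skew_poly_ring \<sigma>1 \<sigma>2 Quot t1t2_ideal \<sigma>1 \<sigma>2"

definition quot_const ::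
  "('a::division_ring \<Rightarrow> 'a) \<Rightarrow> ('a \<Rightarrow> 'a) \<Rightarrow> 'a \<Rightarrow> (nat \<times> nat \<Rightarrow> 'a) set" where
  "quot_const \<sigma>1 \<sigma>2 a =
     a_r_coset (skew_poly_ring \<sigma>1 \<sigma>2) (t1t2_ideal \<sigma>1 \<sigma>2) (skew_monom a (0, 0))"

definition left_alg_dependent ::
  "('a::division_ring \<Rightarrow> 'a) \<Rightarrow> ('a \<Rightarrow> 'a) \<Rightarrow> (nat \<times> nat \<Rightarrow> 'a) set \<Rightarrow> (nat \<times> nat \<Rightarrow> 'a) set \<Rightarrow> bool" where
  "left_alg_dependent \<sigma>1 \<sigma>2 x1 x2 \<longleftrightarrow>
     (let S = skew_quot \<sigma>1 \<sigma>2 in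
      \<exists>c :: nat \<times> nat \<Rightarrow> 'a. finite {e. c e \<noteq> 0} \<and> (\<exists>e. c e \<noteq> 0) \<and>
        finsum S (\<lambda>e. quot_const \<sigma>1 \<sigma>2 (c e) \<otimes>\<^bsub>S\<^esub>
             (x1 [^]\<^bsub>S\<^esub> fst e \<otimes>\<^bsub>S\<^esub> x2 [^]\<^bsub>S\<^esub> snd e)) {e. c e \<noteq> 0}
        = \<zero>\<^bsub>S\<^esub>)"

end

(* Modulo I = (t1 t2) a polynomial is determined by its coefficients on the two axes
   {(i, 0)} and {(0, j)}, so the part of S of total degree at most B is spanned over D by
   2B + 2 monomials: S has linear growth.  If x1, x2 lift to polynomials of total degree at
   most d, the (N + 1)^2 products x1^i x2^j with i, j <= N have degree at most 2Nd, and for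
   N = 4d + 1 they outnumber 4Nd + 2.  Left linear algebra over D then gives a nontrivial
   left relation among them modulo I. *)
theory Submission
  imports Defs "HOL-Algebra.UnivPoly"
begin

definition ring_endomorphism :: "('a::ring_1 \<Rightarrow> 'a) \<Rightarrow> bool" where
  "ring_endomorphism s \<longleftrightarrow>
     (\<forall>x y. s (x + y) = s x + s y) \<and> (\<forall>x y. s (x * y) = s x * s y) \<and> s 1 = 1"

lemma ring_automorphism_imp_endomorphism: "ring_automorphism s \<Longrightarrow> ring_endomorphism s"
  by (simp add: ring_automorphism_def ring_endomorphism_def)

lemma ring_endomorphism_comp:
  "ring_endomorphism s \<Longrightarrow> ring_endomorphism t \<Longrightarrow> ring_endomorphism (s \<circ> t)"
  by (auto simp: ring_endomorphism_def)

lemma ring_endomorphism_funpow: "ring_endomorphism s \<Longrightarrow> ring_endomorphism (s ^^ n)"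
  by (induction n) (auto simp: ring_endomorphism_def)

lemma ring_endomorphism_zero: "ring_endomorphism s \<Longrightarrow> s 0 = 0"
  unfolding ring_endomorphism_def by (metis add_cancel_right_right)

lemma ring_endomorphism_sum: "ring_endomorphism s \<Longrightarrow> s (sum f A) = (\<Sum>a\<in>A. s (f a))"
  by (induction A rule: infinite_finite_induct)
    (auto simp: ring_endomorphism_zero ring_endomorphism_def)

lemma funpow_comp_commute:
  assumes "s \<circ> t = t \<circ> s"
  shows "(s ^^ n) \<circ> (t ^^ m) = (t ^^ m) \<circ> (s ^^ n)"
proof -
  have "(f ^^ k) \<circ> g = g \<circ> (f ^^ k)" if "f \<circ> g = g \<circ> f" for f g :: "'a \<Rightarrow> 'a" and k
    using that by (induction k) (simp_all, metis comp_assoc)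
  then show ?thesis using assms by metis
qed

lemma sum_triangle_reindex:
  fixes G :: "nat \<Rightarrow> nat \<Rightarrow> 'b::comm_monoid_add"
  shows "(\<Sum>a\<le>m. \<Sum>i\<le>a. G a i) = (\<Sum>i\<le>m. \<Sum>k\<le>m - i. G (i + k) i)"
proof (induction m)
  case (Suc m)
  have "(\<Sum>k\<le>Suc m - i. G (i + k) i) = (\<Sum>k\<le>m - i. G (i + k) i) + G (Suc m) i"
    if "i \<le> m" for i
    using that by (simp add: Suc_diff_le)
  then show ?case using Suc by (simp add: sum.distrib add.assoc)
qed simp

lemma sum_atMost_atMost_delta:
  fixes m n :: nat
  assumes "a \<le> m" "b \<le> n"
  shows "(\<Sum>i\<le>m. \<Sum>j\<le>n. if i = a \<and> j = b then c else 0) = c"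
proof -
  have "(\<Sum>i\<le>m. \<Sum>j\<le>n. if i = a \<and> j = b then c else 0)
      = (\<Sum>i\<le>m. if i = a then (\<Sum>j\<le>n. if j = b then c else 0) else 0)"
    by (intro sum.cong) auto
  then show ?thesis using assms by simp
qed

lemma pivot_elimination_sum:
  fixes v :: "'e \<Rightarrow> 'g \<Rightarrow> 'a::division_ring" and c :: "'e \<Rightarrow> 'a" and g :: 'g
  assumes "finite E" "e0 \<notin> E"
  defines "k \<equiv> - (\<Sum>e\<in>E. c e * v e g) * inverse (v e0 g)"
  shows "(\<Sum>e\<in>insert e0 E. (c(e0 := k)) e * v e h)
       = (\<Sum>e\<in>E. c e * (v e h - v e g * inverse (v e0 g) * v e0 h))"
proof -
  have "(\<Sum>e\<in>E. (c(e0 := k)) e * v e h) = (\<Sum>e\<in>E. c e * v e h)"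
    using assms(2) by (intro sum.cong) auto
  then have "(\<Sum>e\<in>insert e0 E. (c(e0 := k)) e * v e h) = k * v e0 h + (\<Sum>e\<in>E. c e * v e h)"
    using assms(1,2) by simp
  also have "\<dots> = (\<Sum>e\<in>E. c e * (v e h - v e g * inverse (v e0 g) * v e0 h))"
    by (simp add: k_def right_diff_distrib sum_subtractf sum_distrib_right mult.assoc)
  finally show ?thesis .
qed

lemma exists_nontrivial_left_relation:
  fixes v :: "'e \<Rightarrow> 'g \<Rightarrow> 'a::division_ring"
  assumes "finite G" "finite E" "card G < card E"
  shows "\<exists>c. (\<forall>e. e \<notin> E \<longrightarrow> c e = 0) \<and> (\<exists>e\<in>E. c e \<noteq> 0)
           \<and> (\<forall>g\<in>G. (\<Sum>e\<in>E. c e * v e g) = 0)"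
  using assms
proof (induction G arbitrary: E v rule: finite_induct)
  case empty
  then obtain e0 where "e0 \<in> E" by fastforce
  then show ?case by (intro exI[of _ "\<lambda>e. if e = e0 then 1 else 0"]) auto
next
  case (insert g G)
  show ?case
  proof (cases "\<forall>e\<in>E. v e g = 0")
    case True
    have "card G < card E" using insert by simp
    then show ?thesis using insert.IH[of E v] insert.prems True by auto
  next
    case False
    then obtain e0 where e0: "e0 \<in> E" "v e0 g \<noteq> 0" by auto
    define E' where "E' = E - {e0}"
    define w where "w e h = v e h - v e g * inverse (v e0 g) * v e0 h" for e h
    have E: "E = insert e0 E'" "e0 \<notin> E'" "finite E'"
      using e0 insert.prems by (auto simp: E'_def)
    have "card G < card E'" using insert e0 by (simp add: E'_def)
    then obtain c where c: "\<forall>e. e \<notin> E' \<longrightarrow> c e = 0" "\<exists>e\<in>E'. c e \<noteq> 0"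
      "\<forall>h\<in>G. (\<Sum>e\<in>E'. c e * w e h) = 0"
      using insert.IH[OF \<open>finite E'\<close>, of w] by blast
    define k where "k = - (\<Sum>e\<in>E'. c e * v e g) * inverse (v e0 g)"
    have "(\<Sum>e\<in>E. (c(e0 := k)) e * v e h) = (\<Sum>e\<in>E'. c e * w e h)" for h
      unfolding E(1) w_def k_def by (rule pivot_elimination_sum[OF E(3,2)])
    moreover have "w e g = 0" for e using e0(2) by (simp add: w_def mult.assoc)
    moreover have "\<exists>e\<in>E. (c(e0 := k)) e \<noteq> 0" using c(2) E by force
    ultimately show ?thesis using c E
      by (intro exI[of _ "c(e0 := k)"]) auto
  qed
qed

definition total_degree_le :: "(nat \<times> nat \<Rightarrow> 'a::zero) \<Rightarrow> nat \<Rightarrow> bool" where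
  "total_degree_le p d \<longleftrightarrow> (\<forall>m n. p (m, n) \<noteq> 0 \<longrightarrow> m + n \<le> d)"

lemma total_degree_le_mono: "total_degree_le p d \<Longrightarrow> d \<le> d' \<Longrightarrow> total_degree_le p d'"
  unfolding total_degree_le_def by (meson order_trans)

lemma total_degree_le_exists: "finite {x. p x \<noteq> 0} \<Longrightarrow> \<exists>d. total_degree_le p d"
  by (rule exI[of _ "Max ((\<lambda>(m, n). m + n) ` {x. p x \<noteq> 0})"])
    (auto simp: total_degree_le_def intro!: Max_ge)

lemma exists_left_relation_on_axes:
  fixes P :: "'e \<Rightarrow> nat \<times> nat \<Rightarrow> 'a::division_ring"
  assumes "finite E" "2 * B + 2 < card E" "\<forall>e\<in>E. total_degree_le (P e) B"
  shows "\<exists>c. (\<forall>e. e \<notin> E \<longrightarrow> c e = 0) \<and> (\<exists>e\<in>E. c e \<noteq> 0)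
           \<and> (\<forall>x. fst x = 0 \<or> snd x = 0 \<longrightarrow> (\<Sum>e\<in>E. c e * P e x) = 0)"
proof -
  define G where "G = {..B} \<times> {0::nat} \<union> {0::nat} \<times> {..B}"
  have "card G \<le> card ({..B} \<times> {0::nat}) + card ({0::nat} \<times> {..B})"
    unfolding G_def by (rule card_Un_le)
  then have "card G < card E" using assms(2) by (simp add: card_cartesian_product)
  then obtain c where c: "\<forall>e. e \<notin> E \<longrightarrow> c e = 0" "\<exists>e\<in>E. c e \<noteq> 0"
    "\<forall>g\<in>G. (\<Sum>e\<in>E. c e * P e g) = 0"
    using exists_nontrivial_left_relation[of G E P] assms(1) by (auto simp: G_def)
  have "(\<Sum>e\<in>E. c e * P e x) = 0" if "fst x = 0 \<or> snd x = 0" for x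
  proof (cases "x \<in> G")
    case False
    with that have "B < fst x + snd x" by (cases x) (auto simp: G_def)
    then have "P e x = 0" if "e \<in> E" for e
      using assms(3) that unfolding total_degree_le_def by (metis not_le prod.collapse)
    then show ?thesis by simp
  qed (use c in auto)
  with c show ?thesis by blast
qed

locale skew_poly =
  fixes \<sigma>1 \<sigma>2 :: "'a::division_ring \<Rightarrow> 'a"
  assumes endo1: "ring_endomorphism \<sigma>1" and endo2: "ring_endomorphism \<sigma>2"
    and commute: "\<sigma>1 \<circ> \<sigma>2 = \<sigma>2 \<circ> \<sigma>1"
begin

abbreviation R :: "(nat \<times> nat \<Rightarrow> 'a) ring" where
  "R \<equiv> skew_poly_ring \<sigma>1 \<sigma>2"

abbreviation I :: "(nat \<times> nat \<Rightarrow> 'a) set" where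
  "I \<equiv> t1t2_ideal \<sigma>1 \<sigma>2"

definition twist :: "nat \<Rightarrow> nat \<Rightarrow> 'a \<Rightarrow> 'a" where
  "twist i j x = (\<sigma>1 ^^ i) ((\<sigma>2 ^^ j) x)"

lemma twist_endomorphism: "ring_endomorphism (twist i j)"
proof -
  have "twist i j = (\<sigma>1 ^^ i) \<circ> (\<sigma>2 ^^ j)" by (auto simp: twist_def fun_eq_iff)
  then show ?thesis
    using ring_endomorphism_comp ring_endomorphism_funpow endo1 endo2 by metis
qed

lemma twist_add [simp]: "twist i j (x + y) = twist i j x + twist i j y"
  and twist_mult [simp]: "twist i j (x * y) = twist i j x * twist i j y"
  and twist_zero [simp]: "twist i j 0 = 0"
  and twist_one [simp]: "twist i j 1 = 1"
  and twist_sum: "twist i j (sum f A) = (\<Sum>a\<in>A. twist i j (f a))"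
  using twist_endomorphism[of i j]
  by (auto simp: ring_endomorphism_def ring_endomorphism_zero ring_endomorphism_sum)

(* The only use of the commutation of \<sigma>1 and \<sigma>2: it makes skew_mult associative. *)
lemma twist_twist: "twist i j (twist k l x) = twist (i + k) (j + l) x"
proof -
  have "(\<sigma>2 ^^ j) ((\<sigma>1 ^^ k) y) = (\<sigma>1 ^^ k) ((\<sigma>2 ^^ j) y)" for y
    using funpow_comp_commute[OF commute, of k j] by (metis comp_apply)
  then show ?thesis by (simp add: twist_def funpow_add)
qed

lemma skew_mult_apply:
  "skew_mult \<sigma>1 \<sigma>2 p q (m, n) = (\<Sum>i\<le>m. \<Sum>j\<le>n. p (i, j) * twist i j (q (m - i, n - j)))"
  by (simp add: skew_mult_def twist_def)

lemma skew_mult_assoc: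
  "skew_mult \<sigma>1 \<sigma>2 (skew_mult \<sigma>1 \<sigma>2 p q) r = skew_mult \<sigma>1 \<sigma>2 p (skew_mult \<sigma>1 \<sigma>2 q r)"
proof (intro ext, clarify)
  fix m n
  define F where
    "F i j a b = p (i, j) * twist i j (q (a - i, b - j)) * twist a b (r (m - a, n - b))" for i j a b
  have "skew_mult \<sigma>1 \<sigma>2 (skew_mult \<sigma>1 \<sigma>2 p q) r (m, n)
      = (\<Sum>a\<le>m. \<Sum>b\<le>n. \<Sum>i\<le>a. \<Sum>j\<le>b. F i j a b)"
    by (simp add: skew_mult_apply F_def sum_distrib_right)
  also have "\<dots> = (\<Sum>a\<le>m. \<Sum>i\<le>a. \<Sum>b\<le>n. \<Sum>j\<le>b. F i j a b)"
    by (intro sum.cong refl sum.swap)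
  also have "\<dots> = (\<Sum>i\<le>m. \<Sum>k\<le>m - i. \<Sum>b\<le>n. \<Sum>j\<le>b. F i j (i + k) b)"
    by (rule sum_triangle_reindex)
  also have "\<dots> = (\<Sum>i\<le>m. \<Sum>k\<le>m - i. \<Sum>j\<le>n. \<Sum>l\<le>n - j. F i j (i + k) (j + l))"
    by (intro sum.cong refl sum_triangle_reindex)
  also have "\<dots> = (\<Sum>i\<le>m. \<Sum>j\<le>n. \<Sum>k\<le>m - i. \<Sum>l\<le>n - j. F i j (i + k) (j + l))"
    by (intro sum.cong refl sum.swap)
  also have "\<dots> = skew_mult \<sigma>1 \<sigma>2 p (skew_mult \<sigma>1 \<sigma>2 q r) (m, n)"
    by (simp add: skew_mult_apply F_def twist_sum sum_distrib_left twist_twist mult.assoc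
        diff_diff_add)
  finally show "skew_mult \<sigma>1 \<sigma>2 (skew_mult \<sigma>1 \<sigma>2 p q) r (m, n)
      = skew_mult \<sigma>1 \<sigma>2 p (skew_mult \<sigma>1 \<sigma>2 q r) (m, n)" .
qed

lemma skew_mult_nonzero_imp:
  assumes "skew_mult \<sigma>1 \<sigma>2 p q (m, n) \<noteq> 0"
  obtains i j where "i \<le> m" "j \<le> n" "p (i, j) \<noteq> 0" "q (m - i, n - j) \<noteq> 0"
proof -
  obtain i j where "i \<le> m" "j \<le> n" "p (i, j) * twist i j (q (m - i, n - j)) \<noteq> 0"
    using assms unfolding skew_mult_apply by (metis (no_types, lifting) atMost_iff sum.neutral)
  then show ?thesis using that by fastforce
qed

lemma finite_support_skew_mult:
  assumes "finite {x. p x \<noteq> 0}" "finite {x. q x \<noteq> 0}"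
  shows "finite {x. skew_mult \<sigma>1 \<sigma>2 p q x \<noteq> 0}"
proof (rule finite_subset)
  let ?plus = "\<lambda>((i, j), (k, l)). (i + k, j + l :: nat)"
  show "{x. skew_mult \<sigma>1 \<sigma>2 p q x \<noteq> 0} \<subseteq> ?plus ` ({x. p x \<noteq> 0} \<times> {x. q x \<noteq> 0})"
  proof clarify
    fix m n assume "skew_mult \<sigma>1 \<sigma>2 p q (m, n) \<noteq> 0"
    then obtain i j where "i \<le> m" "j \<le> n" "p (i, j) \<noteq> 0" "q (m - i, n - j) \<noteq> 0"
      by (rule skew_mult_nonzero_imp)
    then show "(m, n) \<in> ?plus ` ({x. p x \<noteq> 0} \<times> {x. q x \<noteq> 0})"
      by (intro image_eqI[of _ _ "((i, j), (m - i, n - j))"]) auto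
  qed
qed (use assms in auto)

lemma finite_support_skew_monom: "finite {x. skew_monom a e x \<noteq> 0}"
  by (rule finite_subset[of _ "{e}"]) (auto simp: skew_monom_def)

lemma skew_mult_const_left: "skew_mult \<sigma>1 \<sigma>2 (skew_monom a (0, 0)) q = (\<lambda>x. a * q x)"
proof (intro ext, clarify)
  fix m n
  have "skew_mult \<sigma>1 \<sigma>2 (skew_monom a (0, 0)) q (m, n)
      = (\<Sum>i\<le>m. \<Sum>j\<le>n. if i = 0 \<and> j = 0 then a * q (m, n) else 0)"
    unfolding skew_mult_apply skew_monom_def by (intro sum.cong refl) (auto simp: twist_def)
  then show "skew_mult \<sigma>1 \<sigma>2 (skew_monom a (0, 0)) q (m, n) = a * q (m, n)"
    by (simp add: sum_atMost_atMost_delta)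
qed

lemma skew_mult_one_right: "skew_mult \<sigma>1 \<sigma>2 q (skew_monom 1 (0, 0)) = q"
proof (intro ext, clarify)
  fix m n
  have "skew_mult \<sigma>1 \<sigma>2 q (skew_monom 1 (0, 0)) (m, n)
      = (\<Sum>i\<le>m. \<Sum>j\<le>n. if i = m \<and> j = n then q (m, n) else 0)"
    unfolding skew_mult_apply skew_monom_def
    by (intro sum.cong refl) auto
  then show "skew_mult \<sigma>1 \<sigma>2 q (skew_monom 1 (0, 0)) (m, n) = q (m, n)"
    by (simp add: sum_atMost_atMost_delta)
qed

lemma skew_mult_monom:
  "skew_mult \<sigma>1 \<sigma>2 (skew_monom a (i, j)) (skew_monom b (k, l))
     = skew_monom (a * twist i j b) (i + k, j + l)"
proof (intro ext, clarify)
  fix m n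
  have "skew_mult \<sigma>1 \<sigma>2 (skew_monom a (i, j)) (skew_monom b (k, l)) (m, n)
      = (\<Sum>i'\<le>m. \<Sum>j'\<le>n. if i' = i \<and> j' = j
           then a * twist i j (skew_monom b (k, l) (m - i, n - j)) else 0)"
    unfolding skew_mult_apply by (intro sum.cong refl) (auto simp: skew_monom_def)
  also have "\<dots> = skew_monom (a * twist i j b) (i + k, j + l) (m, n)"
    by (cases "i \<le> m \<and> j \<le> n")
      (auto simp: sum_atMost_atMost_delta skew_monom_def intro!: sum.neutral)
  finally show "skew_mult \<sigma>1 \<sigma>2 (skew_monom a (i, j)) (skew_monom b (k, l)) (m, n)
      = skew_monom (a * twist i j b) (i + k, j + l) (m, n)" .
qed

lemma skew_poly_ring_simps [simp]:
  "carrier R = {p. finite {x. p x \<noteq> 0}}"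
  "mult R = skew_mult \<sigma>1 \<sigma>2" "one R = skew_monom 1 (0, 0)" "zero R = (\<lambda>_. 0)"
  "add R = (\<lambda>p q x. p x + q x)"
  by (simp_all add: skew_poly_ring_def)

lemma ring_skew_poly_ring: "ring R"
proof (rule ringI)
  show "abelian_group R"
  proof (rule abelian_groupI)
    fix x y assume "x \<in> carrier R" "y \<in> carrier R"
    then show "x \<oplus>\<^bsub>R\<^esub> y \<in> carrier R"
      by (auto intro: finite_subset[of _ "{a. x a \<noteq> 0} \<union> {a. y a \<noteq> 0}"])
  next
    fix x assume "x \<in> carrier R"
    then show "\<exists>y\<in>carrier R. y \<oplus>\<^bsub>R\<^esub> x = \<zero>\<^bsub>R\<^esub>"
      by (intro bexI[of _ "\<lambda>a. - x a"]) auto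
  qed (auto simp: add.assoc add.commute)
next
  show "monoid R"
    by (rule monoidI) (auto simp: finite_support_skew_mult finite_support_skew_monom
        skew_mult_assoc skew_mult_const_left skew_mult_one_right)
next
  fix x y z
  show "(x \<oplus>\<^bsub>R\<^esub> y) \<otimes>\<^bsub>R\<^esub> z = x \<otimes>\<^bsub>R\<^esub> z \<oplus>\<^bsub>R\<^esub> y \<otimes>\<^bsub>R\<^esub> z"
    by (simp, intro ext, clarify, simp only: skew_mult_apply ring_distribs sum.distrib)
  show "z \<otimes>\<^bsub>R\<^esub> (x \<oplus>\<^bsub>R\<^esub> y) = z \<otimes>\<^bsub>R\<^esub> x \<oplus>\<^bsub>R\<^esub> z \<otimes>\<^bsub>R\<^esub> y"
    by (simp, intro ext, clarify, simp only: skew_mult_apply twist_add ring_distribs sum.distrib)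
qed

end

sublocale skew_poly \<subseteq> skew: ring "skew_poly_ring \<sigma>1 \<sigma>2"
  by (rule ring_skew_poly_ring)

context skew_poly
begin

lemma ideal_t1t2_ideal: "ideal I R"
  unfolding t1t2_ideal_def by (rule skew.genideal_ideal) (simp add: finite_support_skew_monom)

end

sublocale skew_poly \<subseteq> t1t2: ideal "t1t2_ideal \<sigma>1 \<sigma>2" "skew_poly_ring \<sigma>1 \<sigma>2"
  by (rule ideal_t1t2_ideal)

context skew_poly
begin

lemma skew_monom_in_t1t2_ideal:
  assumes "0 < i" "0 < j"
  shows "skew_monom a (i, j) \<in> I"
proof -
  have "skew_monom 1 (1, 1) \<in> I"
    unfolding t1t2_ideal_def
    by (rule skew.genideal_self'[simplified]) (simp add: finite_support_skew_monom)
  then have "skew_monom a (i - 1, 0) \<otimes>\<^bsub>R\<^esub> skew_monom 1 (1, 1) \<otimes>\<^bsub>R\<^esub> skew_monom 1 (0, j - 1) \<in> I"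
    by (intro t1t2.I_r_closed t1t2.I_l_closed) (simp_all add: finite_support_skew_monom)
  then show ?thesis
    using assms by (simp add: skew_mult_monom)
qed

lemma vanishing_on_axes_in_t1t2_ideal:
  assumes "p \<in> carrier R" "\<forall>i. p (i, 0) = 0" "\<forall>j. p (0, j) = 0"
  shows "p \<in> I"
proof -
  have "p \<in> I" if "finite A" "{x. p x \<noteq> 0} \<subseteq> A" "\<forall>i. p (i, 0) = 0" "\<forall>j. p (0, j) = 0"
    for A p
    using that
  proof (induction A arbitrary: p rule: finite_induct)
    case empty
    then have "p = \<zero>\<^bsub>R\<^esub>" by auto
    then show ?case using t1t2.zero_closed by simp
  next
    case (insert g A)
    obtain i j where g: "g = (i, j)" by force
    have "p(g := 0) \<in> I" using insert by (intro insert.IH) auto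
    moreover have "skew_monom (p g) g \<in> I"
    proof (cases "p g = 0")
      case True
      then have "skew_monom (p g) g = \<zero>\<^bsub>R\<^esub>" by (simp add: skew_monom_def fun_eq_iff)
      then show ?thesis using t1t2.zero_closed by simp
    next
      case False
      then have "0 < i" "0 < j" using insert.prems g by (auto intro!: gr0I)
      then show ?thesis using g skew_monom_in_t1t2_ideal by simp
    qed
    moreover have "p = skew_monom (p g) g \<oplus>\<^bsub>R\<^esub> p(g := 0)"
      by (simp add: fun_eq_iff skew_monom_def)
    ultimately show ?case by (metis t1t2.a_closed)
  qed
  then show ?thesis using assms by auto
qed

lemma total_degree_le_skew_mult:
  assumes "total_degree_le p d" "total_degree_le q e"
  shows "total_degree_le (skew_mult \<sigma>1 \<sigma>2 p q) (d + e)"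
  unfolding total_degree_le_def
proof (intro allI impI)
  fix m n assume "skew_mult \<sigma>1 \<sigma>2 p q (m, n) \<noteq> 0"
  then obtain i j where "i \<le> m" "j \<le> n" "p (i, j) \<noteq> 0" "q (m - i, n - j) \<noteq> 0"
    by (rule skew_mult_nonzero_imp)
  with assms show "m + n \<le> d + e" unfolding total_degree_le_def by fastforce
qed

lemma total_degree_le_pow: "total_degree_le p d \<Longrightarrow> total_degree_le (p [^]\<^bsub>R\<^esub> k) (k * d)"
proof (induction k)
  case 0
  then show ?case by (simp add: total_degree_le_def skew_monom_def)
next
  case (Suc k)
  then show ?case using total_degree_le_skew_mult[OF Suc.IH Suc.prems] by (simp add: add.commute)
qed

lemma finsum_apply:
  "finite A \<Longrightarrow> f \<in> A \<rightarrow> carrier R \<Longrightarrow> finsum R f A x = (\<Sum>a\<in>A. f a x)"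
proof (induction A rule: finite_induct)
  case (insert a A)
  then have "finsum R f (insert a A) = f a \<oplus>\<^bsub>R\<^esub> finsum R f A"
    by (intro skew.finsum_insert) auto
  then show ?case using insert by simp
qed (simp add: skew.finsum_empty)

lemma exists_left_relation_mod_t1t2:
  assumes "p1 \<in> carrier R" "p2 \<in> carrier R"
  obtains c :: "nat \<times> nat \<Rightarrow> 'a" where "finite {e. c e \<noteq> 0}" "\<exists>e. c e \<noteq> 0"
    "(\<Oplus>\<^bsub>R\<^esub>e\<in>{e. c e \<noteq> 0}.
        skew_monom (c e) (0, 0) \<otimes>\<^bsub>R\<^esub> (p1 [^]\<^bsub>R\<^esub> fst e \<otimes>\<^bsub>R\<^esub> p2 [^]\<^bsub>R\<^esub> snd e)) \<in> I"
proof -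
  obtain d1 d2 where "total_degree_le p1 d1" "total_degree_le p2 d2"
    using assms total_degree_le_exists by (metis skew_poly_ring_simps(1) mem_Collect_eq)
  then obtain d where deg: "total_degree_le p1 d" "total_degree_le p2 d"
    by (meson le_add1 le_add2 total_degree_le_mono)
  define N where "N = 4 * d + 1"
  define E where "E = {..N} \<times> {..N}"
  define P where "P e = p1 [^]\<^bsub>R\<^esub> fst e \<otimes>\<^bsub>R\<^esub> p2 [^]\<^bsub>R\<^esub> snd e" for e :: "nat \<times> nat"
  have P_carrier: "P e \<in> carrier R" for e
    unfolding P_def by (intro skew.m_closed skew.nat_pow_closed assms)
  have "total_degree_le (P e) (2 * N * d)" if "e \<in> E" for e
  proof (rule total_degree_le_mono)
    show "total_degree_le (P e) (fst e * d + snd e * d)"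
      unfolding P_def using total_degree_le_skew_mult[OF total_degree_le_pow total_degree_le_pow] deg
      by simp
    have "(fst e + snd e) * d \<le> (2 * N) * d"
      using that by (intro mult_right_mono) (auto simp: E_def)
    then show "fst e * d + snd e * d \<le> 2 * N * d"
      by (simp add: algebra_simps)
  qed
  moreover have "2 * (2 * N * d) + 2 < card E"
    by (simp add: E_def N_def card_cartesian_product algebra_simps)
  ultimately obtain c where c: "\<forall>e. e \<notin> E \<longrightarrow> c e = 0" "\<exists>e\<in>E. c e \<noteq> 0"
    "\<forall>x. fst x = 0 \<or> snd x = 0 \<longrightarrow> (\<Sum>e\<in>E. c e * P e x) = 0"
    using exists_left_relation_on_axes[of E "2 * N * d" P] by (auto simp: E_def)
  define A where "A = {e. c e \<noteq> 0}"
  have "A \<subseteq> E" using c(1) by (auto simp: A_def)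
  then have A: "A \<subseteq> E" "finite A" by (auto simp: E_def intro: finite_subset)
  define Q where "Q = (\<Oplus>\<^bsub>R\<^esub>e\<in>A. skew_monom (c e) (0, 0) \<otimes>\<^bsub>R\<^esub> P e)"
  have term_carrier: "skew_monom (c e) (0, 0) \<otimes>\<^bsub>R\<^esub> P e \<in> carrier R" for e
    using P_carrier finite_support_skew_monom by (intro skew.m_closed) auto
  have "Q x = (\<Sum>e\<in>E. c e * P e x)" for x
  proof -
    have "Q x = (\<Sum>e\<in>A. c e * P e x)"
      unfolding Q_def using A(2) term_carrier
      by (simp add: finsum_apply del: skew_poly_ring_simps) (simp add: skew_mult_const_left)
    also have "\<dots> = (\<Sum>e\<in>E. c e * P e x)"
      using A by (intro sum.mono_neutral_left) (auto simp: A_def E_def)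
    finally show ?thesis .
  qed
  moreover have "Q \<in> carrier R"
    unfolding Q_def using term_carrier by (intro skew.finsum_closed) auto
  ultimately have "Q \<in> I"
    using c(3) by (intro vanishing_on_axes_in_t1t2_ideal) auto
  then show ?thesis
    using that A(2) c(2) unfolding Q_def P_def A_def by blast
qed

lemma left_alg_dependent_cosets:
  assumes "p1 \<in> carrier R" "p2 \<in> carrier R"
  shows "left_alg_dependent \<sigma>1 \<sigma>2 (I +>\<^bsub>R\<^esub> p1) (I +>\<^bsub>R\<^esub> p2)"
proof -
  let ?S = "skew_quot \<sigma>1 \<sigma>2"
  interpret h: ring_hom_ring R ?S "(+>\<^bsub>R\<^esub>) I"
    unfolding skew_quot_def by (rule t1t2.rcos_ring_hom_ring)
  obtain c :: "nat \<times> nat \<Rightarrow> 'a" where c: "finite {e. c e \<noteq> 0}" "\<exists>e. c e \<noteq> 0"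
    "(\<Oplus>\<^bsub>R\<^esub>e\<in>{e. c e \<noteq> 0}.
        skew_monom (c e) (0, 0) \<otimes>\<^bsub>R\<^esub> (p1 [^]\<^bsub>R\<^esub> fst e \<otimes>\<^bsub>R\<^esub> p2 [^]\<^bsub>R\<^esub> snd e)) \<in> I"
    using exists_left_relation_mod_t1t2[OF assms] by blast
  let ?f = "\<lambda>e. skew_monom (c e) (0, 0) \<otimes>\<^bsub>R\<^esub> (p1 [^]\<^bsub>R\<^esub> fst e \<otimes>\<^bsub>R\<^esub> p2 [^]\<^bsub>R\<^esub> snd e)"
  have const: "skew_monom a (0, 0) \<in> carrier R" for a
    using finite_support_skew_monom by simp
  have f_carrier: "?f e \<in> carrier R" for e
    by (intro skew.m_closed skew.nat_pow_closed const assms)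
  have "quot_const \<sigma>1 \<sigma>2 (c e) \<otimes>\<^bsub>?S\<^esub>
          ((I +>\<^bsub>R\<^esub> p1) [^]\<^bsub>?S\<^esub> fst e \<otimes>\<^bsub>?S\<^esub> (I +>\<^bsub>R\<^esub> p2) [^]\<^bsub>?S\<^esub> snd e)
        = I +>\<^bsub>R\<^esub> ?f e" for e
    by (simp add: quot_const_def h.hom_mult h.hom_nat_pow skew.nat_pow_closed const assms
        del: skew_poly_ring_simps)
  then have "(\<Oplus>\<^bsub>?S\<^esub>e\<in>{e. c e \<noteq> 0}. quot_const \<sigma>1 \<sigma>2 (c e) \<otimes>\<^bsub>?S\<^esub>
          ((I +>\<^bsub>R\<^esub> p1) [^]\<^bsub>?S\<^esub> fst e \<otimes>\<^bsub>?S\<^esub> (I +>\<^bsub>R\<^esub> p2) [^]\<^bsub>?S\<^esub> snd e))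
        = I +>\<^bsub>R\<^esub> (\<Oplus>\<^bsub>R\<^esub>e\<in>{e. c e \<noteq> 0}. ?f e)"
    using f_carrier c(1) by (simp add: h.hom_finsum comp_def del: skew_poly_ring_simps)
  also have "\<dots> = \<zero>\<^bsub>?S\<^esub>"
    using skew.a_rcos_zero[OF ideal_t1t2_ideal c(3)] by (simp add: skew_quot_def FactRing_def)
  finally show ?thesis
    unfolding left_alg_dependent_def Let_def using c(1,2) by blast
qed

lemma skew_quot_carrier: "x \<in> carrier (skew_quot \<sigma>1 \<sigma>2) \<Longrightarrow> \<exists>p\<in>carrier R. x = I +>\<^bsub>R\<^esub> p"
  by (auto simp: skew_quot_def FactRing_def A_RCOSETS_def RCOSETS_def a_r_coset_def)

end

theorem lemma5p9:
  fixes \<sigma>1 \<sigma>2 :: "'a::division_ring \<Rightarrow> 'a"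
    and x1 x2 :: "(nat \<times> nat \<Rightarrow> 'a) set"
  assumes "ring_automorphism \<sigma>1" and "ring_automorphism \<sigma>2"
    and "\<sigma>1 \<circ> \<sigma>2 = \<sigma>2 \<circ> \<sigma>1"
    and "x1 \<in> carrier (skew_quot \<sigma>1 \<sigma>2)" and "x2 \<in> carrier (skew_quot \<sigma>1 \<sigma>2)"
    and "x1 \<otimes>\<^bsub>skew_quot \<sigma>1 \<sigma>2\<^esub> x2 = x2 \<otimes>\<^bsub>skew_quot \<sigma>1 \<sigma>2\<^esub> x1"
  shows "left_alg_dependent \<sigma>1 \<sigma>2 x1 x2"
proof -
  interpret skew_poly \<sigma>1 \<sigma>2
    using assms(1-3) by (simp add: skew_poly_def ring_automorphism_imp_endomorphism)
  obtain p1 p2 where "p1 \<in> carrier R" "x1 = I +>\<^bsub>R\<^esub> p1" "p2 \<in> carrier R" "x2 = I +>\<^bsub>R\<^esub> p2"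
    using skew_quot_carrier assms(4,5) by metis
  then show ?thesis using left_alg_dependent_cosets by blast
qed

end
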